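(* Let $(M_\alpha,\varphi_{\alpha\beta})$ be an inverse system, indexed by a countable upward directed poset, of injective $\mathbb{Z}$-modules and surjective homomorphisms $\varphi_{\alpha\beta}:M_\beta\to M_\alpha$, and let $M$ be its inverse limit. Let $M_{\mathrm{div}}$ be the largest divisible submodule of $M$, i.e. the sum of the images of all $\mathbb{Z}$-module homomorphisms $\mathbb{Q}\to M$. Then for every index $\alpha$, the composite $M_{\mathrm{div}}\hookrightarrow M\to M_\alpha$ (with $M\to M_\alpha$ the canonical projection) is surjective.
   Context: For $\mathbb{Z}$-modules (abelian groups), injective is equivalent to divisible. *)

theory Defs
  imports "HOL-Algebra.Algebra" "HOL-Library.Countable_Set"
begin

definition rational_group :: "rat monoid"
  where "rational_group = \<lparr>carrier = UNIV, monoid.mult = (+), one = (0::rat)\<rparr>"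

text \<open>Divisible abelian group (for Z-modules: injective iff divisible).\<close>
definition divisible_group :: "('a, 'c) monoid_scheme \<Rightarrow> bool"
  where "divisible_group G \<longleftrightarrow>
     comm_group G \<and>
     (\<forall>x\<in>carrier G. \<forall>n::nat. n > 0 \<longrightarrow> (\<exists>y\<in>carrier G. y [^]\<^bsub>G\<^esub> n = x))"

definition inverse_system :: "('i::order \<Rightarrow> ('a, 'c) monoid_scheme) \<Rightarrow> ('i \<Rightarrow> 'i \<Rightarrow> 'a \<Rightarrow> 'a) \<Rightarrow> bool"
  where "inverse_system G \<phi> \<longleftrightarrow>
     (\<forall>i. comm_group (G i)) \<and>
     (\<forall>i j. i \<le> j \<longrightarrow> \<phi> i j \<in> hom (G j) (G i)) \<and>
     (\<forall>i. \<forall>x\<in>carrier (G i). \<phi> i i x = x) \<and>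
     (\<forall>i j k. i \<le> j \<longrightarrow> j \<le> k \<longrightarrow> (\<forall>x\<in>carrier (G k). \<phi> i j (\<phi> j k x) = \<phi> i k x))"

definition inverse_limit :: "('i::order \<Rightarrow> ('a, 'c) monoid_scheme) \<Rightarrow> ('i \<Rightarrow> 'i \<Rightarrow> 'a \<Rightarrow> 'a) \<Rightarrow> ('i \<Rightarrow> 'a) monoid"
  where "inverse_limit G \<phi> =
     \<lparr>carrier = {x \<in> carrier (product_group UNIV G). \<forall>i j. i \<le> j \<longrightarrow> \<phi> i j (x j) = x i},
      monoid.mult = monoid.mult (product_group UNIV G),
      one = one (product_group UNIV G)\<rparr>"

definition divisible_part :: "('b, 'c) monoid_scheme \<Rightarrow> 'b set"
  where "divisible_part M = generate M (\<Union>h \<in> hom rational_group M. h ` carrier rational_group)"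

end

theory Submission
  imports Defs
begin

text \<open>
  We show that every \<open>x \<in> M\<^sub>\<alpha>\<close> is the
  \<open>\<alpha>\<close>-component of \<open>h 1\<close> for some homomorphism \<open>h : \<rat> \<rightarrow> M\<close>; since \<open>h 1\<close> lies in the
  divisible part of \<open>M\<close>, the projection of the divisible part onto \<open>M\<^sub>\<alpha>\<close> is surjective.

  The proof proceeds in three stages.
  (1) Countability and directedness give a monotone cofinal chain \<open>\<alpha> = c 0 \<le> c 1 \<le> \<dots>\<close>;
      every thread of the reindexed system \<open>n \<mapsto> M\<^bsub>c n\<^esub>\<close> extends uniquely to a thread of the
      whole system, and this extension is a homomorphism.  So it suffices to treat
      inverse sequences.
  (2) In an inverse sequence with surjective bonding maps and divisible terms we choose,
      starting from \<open>u 0 = x\<close>, elements \<open>u n\<close> with \<open>\<psi>\<^sub>n\<^sub>,\<^sub>n\<^sub>+\<^sub>1 (u (n+1)\<^sup>n\<^sup>+\<^sup>1) = u n\<close>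
      (a "root sequence"), so that \<open>u N\<close> behaves like \<open>x / N!\<close>.
  (3) From a root sequence we define \<open>h q\<close> componentwise as the image of \<open>u N\<^sup>q\<^sup>\<cdot>\<^sup>N\<^sup>!\<close>
      for any \<open>N\<close> large enough that \<open>q \<cdot> N!\<close> is an integer; this is independent of \<open>N\<close>,
      and \<open>h\<close> is a homomorphism \<open>\<rat> \<rightarrow> lim\<close> with \<open>h 1\<close> having \<open>0\<close>-th component \<open>x\<close>.
\<close>

lemma carrier_inverse_limit:
  "carrier (inverse_limit G \<phi>) =
     {x. (\<forall>i. x i \<in> carrier (G i)) \<and> (\<forall>i j. i \<le> j \<longrightarrow> \<phi> i j (x j) = x i)}"
  by (auto simp: inverse_limit_def PiE_UNIV_domain)

lemma mult_inverse_limit: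
  "x \<otimes>\<^bsub>inverse_limit G \<phi>\<^esub> y = (\<lambda>i. x i \<otimes>\<^bsub>G i\<^esub> y i)"
  by (simp add: inverse_limit_def restrict_UNIV)

lemma inverse_system_group: "inverse_system G \<phi> \<Longrightarrow> group (G i)"
  by (simp add: inverse_system_def comm_group_def)

lemma inverse_system_hom: "inverse_system G \<phi> \<Longrightarrow> i \<le> j \<Longrightarrow> \<phi> i j \<in> hom (G j) (G i)"
  by (simp add: inverse_system_def)

lemma inverse_system_refl: "inverse_system G \<phi> \<Longrightarrow> x \<in> carrier (G i) \<Longrightarrow> \<phi> i i x = x"
  by (simp add: inverse_system_def)

lemma inverse_system_trans:
  "inverse_system G \<phi> \<Longrightarrow> i \<le> j \<Longrightarrow> j \<le> k \<Longrightarrow> x \<in> carrier (G k) \<Longrightarrow> \<phi> i j (\<phi> j k x) = \<phi> i k x"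
  by (simp add: inverse_system_def)

lemma inverse_system_group_hom:
  "inverse_system G \<phi> \<Longrightarrow> i \<le> j \<Longrightarrow> group_hom (G j) (G i) (\<phi> i j)"
  by (simp add: group_hom_def group_hom_axioms_def inverse_system_group inverse_system_hom)

lemma inverse_system_closed:
  "inverse_system G \<phi> \<Longrightarrow> i \<le> j \<Longrightarrow> x \<in> carrier (G j) \<Longrightarrow> \<phi> i j x \<in> carrier (G i)"
  by (meson hom_in_carrier inverse_system_hom)

lemma inverse_limit_subgroup:
  assumes sys: "inverse_system G \<phi>"
  shows "subgroup (carrier (inverse_limit G \<phi>)) (product_group UNIV G)"
proof (rule group.subgroupI)
  show "group (product_group UNIV G)" using sys by (simp add: inverse_system_group)
  show "carrier (inverse_limit G \<phi>) \<subseteq> carrier (product_group UNIV G)"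
    by (auto simp: carrier_inverse_limit)
  have "(\<lambda>i. \<one>\<^bsub>G i\<^esub>) \<in> carrier (inverse_limit G \<phi>)"
    using sys by (simp add: carrier_inverse_limit inverse_system_group group.is_monoid
                              group_hom.hom_one inverse_system_group_hom)
  then show "carrier (inverse_limit G \<phi>) \<noteq> {}" by blast
next
  fix x assume x: "x \<in> carrier (inverse_limit G \<phi>)"
  then have "inv\<^bsub>product_group UNIV G\<^esub> x = (\<lambda>i. inv\<^bsub>G i\<^esub> x i)"
    using sys by (simp add: carrier_inverse_limit inverse_system_group PiE_UNIV_domain restrict_UNIV)
  moreover have "\<phi> i j (inv\<^bsub>G j\<^esub> x j) = inv\<^bsub>G i\<^esub> x i" if "i \<le> j" for i j
    using x that group_hom.hom_inv[OF inverse_system_group_hom[OF sys that]]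
    by (simp add: carrier_inverse_limit)
  ultimately show "inv\<^bsub>product_group UNIV G\<^esub> x \<in> carrier (inverse_limit G \<phi>)"
    using x sys by (simp add: carrier_inverse_limit inverse_system_group)
next
  fix x y assume xy: "x \<in> carrier (inverse_limit G \<phi>)" "y \<in> carrier (inverse_limit G \<phi>)"
  then have "\<phi> i j (x j \<otimes>\<^bsub>G j\<^esub> y j) = x i \<otimes>\<^bsub>G i\<^esub> y i" if "i \<le> j" for i j
    using that group_hom.hom_mult[OF inverse_system_group_hom[OF sys that]]
    by (simp add: carrier_inverse_limit)
  with xy show "x \<otimes>\<^bsub>product_group UNIV G\<^esub> y \<in> carrier (inverse_limit G \<phi>)"
    using sys by (simp add: carrier_inverse_limit inverse_system_group group.is_monoid
                      monoid.m_closed restrict_UNIV)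
qed

lemma inverse_limit_group:
  assumes "inverse_system G \<phi>"
  shows "group (inverse_limit G \<phi>)"
proof -
  have "inverse_limit G \<phi> = (product_group UNIV G)\<lparr>carrier := carrier (inverse_limit G \<phi>)\<rparr>"
    by (simp add: inverse_limit_def product_group_def)
  then show ?thesis
    using assms subgroup.subgroup_is_group[OF inverse_limit_subgroup]
    by (metis inverse_system_group product_group)
qed

lemma divisible_part_subset:
  assumes "group M"
  shows "divisible_part M \<subseteq> carrier M"
  unfolding divisible_part_def
  by (rule group.generate_incl[OF assms]) (auto simp: hom_def)

lemma hom_image_in_divisible_part:
  assumes "h \<in> hom rational_group M"
  shows "h q \<in> divisible_part M"
  unfolding divisible_part_def
  using assms by (intro generate.incl) (auto simp: rational_group_def)

text \<open>A countable directed poset contains a monotone cofinal sequence starting at any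
  given element: enumerate the poset and successively pass to common upper bounds.\<close>

lemma countable_directed_cofinal_chain:
  fixes a :: "'i::order"
  assumes "countable (UNIV :: 'i set)" and directed: "\<forall>a b :: 'i. \<exists>c. a \<le> c \<and> b \<le> c"
  obtains c :: "nat \<Rightarrow> 'i" where "c 0 = a" and "mono c" and "\<And>i. \<exists>n. i \<le> c n"
proof -
  obtain e :: "nat \<Rightarrow> 'i" where e: "range e = UNIV"
    using range_from_nat_into[OF _ assms(1)] by blast
  have "\<exists>c. \<forall>n. (n = 0 \<longrightarrow> c n = a) \<and> (c n \<le> c (Suc n) \<and> e n \<le> c (Suc n))"
  proof (rule dependent_nat_choice)
    show "\<exists>b. 0 = 0 \<longrightarrow> b = a" by blast
  next
    fix b n
    obtain d where "b \<le> d" "e n \<le> d" using directed by blast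
    then show "\<exists>d. (Suc n = 0 \<longrightarrow> d = a) \<and> b \<le> d \<and> e n \<le> d" by blast
  qed
  then obtain c where c: "c 0 = a" "\<And>n. c n \<le> c (Suc n)" "\<And>n. e n \<le> c (Suc n)"
    by blast
  have "\<exists>n. i \<le> c n" for i
  proof -
    have "i \<in> range e" using e by simp
    then obtain n where "i = e n" by blast
    then show ?thesis using c(3) by blast
  qed
  moreover have "mono c"
    using c(2) by (rule mono_iff_le_Suc[THEN iffD2, rule_format])
  ultimately show ?thesis
    using that c(1) by blast
qed

lemma inverse_system_reindex:
  assumes "inverse_system G \<phi>" and "mono c"
  shows "inverse_system (\<lambda>n. G (c n)) (\<lambda>n m. \<phi> (c n) (c m))"
  using assms by (simp add: inverse_system_def monoD)

definition chain_extension ::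
    "(nat \<Rightarrow> 'i::order) \<Rightarrow> ('i \<Rightarrow> 'i \<Rightarrow> 'a \<Rightarrow> 'a) \<Rightarrow> (nat \<Rightarrow> 'a) \<Rightarrow> 'i \<Rightarrow> 'a"
  where "chain_extension c \<phi> y i = \<phi> i (c (LEAST n. i \<le> c n)) (y (LEAST n. i \<le> c n))"

text \<open>Any \<open>n\<close> with \<open>i \<le> c n\<close> computes the extension, by compatibility of the thread.\<close>

lemma chain_extension_eq:
  assumes sys: "inverse_system G \<phi>" and c: "mono c"
    and y: "y \<in> carrier (inverse_limit (\<lambda>n. G (c n)) (\<lambda>n m. \<phi> (c n) (c m)))"
    and i: "i \<le> c n"
  shows "chain_extension c \<phi> y i = \<phi> i (c n) (y n)"
proof -
  define m where "m = (LEAST n. i \<le> c n)"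
  have im: "i \<le> c m" and mn: "m \<le> n"
    using LeastI[of "\<lambda>n. i \<le> c n", OF i] Least_le[of "\<lambda>n. i \<le> c n", OF i]
    by (simp_all add: m_def)
  have "\<phi> i (c n) (y n) = \<phi> i (c m) (\<phi> (c m) (c n) (y n))"
    using inverse_system_trans[OF sys im monoD[OF c mn]] y by (simp add: carrier_inverse_limit)
  also have "\<dots> = \<phi> i (c m) (y m)"
    using y mn by (simp add: carrier_inverse_limit)
  finally show ?thesis
    by (simp add: chain_extension_def m_def)
qed

lemma chain_extension_hom:
  assumes sys: "inverse_system G \<phi>" and c: "mono c" and cofinal: "\<And>i. \<exists>n. i \<le> c n"
  shows "chain_extension c \<phi> \<in>
           hom (inverse_limit (\<lambda>n. G (c n)) (\<lambda>n m. \<phi> (c n) (c m))) (inverse_limit G \<phi>)"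
proof (rule homI)
  let ?L = "inverse_limit (\<lambda>n. G (c n)) (\<lambda>n m. \<phi> (c n) (c m))"
  fix y assume y: "y \<in> carrier ?L"
  then have yn: "y n \<in> carrier (G (c n))" for n
    by (simp add: carrier_inverse_limit)
  have "chain_extension c \<phi> y i \<in> carrier (G i)" for i
  proof -
    obtain n where "i \<le> c n" using cofinal by blast
    then show ?thesis
      using chain_extension_eq[OF sys c y] inverse_system_closed[OF sys _ yn] by simp
  qed
  moreover have "\<phi> i j (chain_extension c \<phi> y j) = chain_extension c \<phi> y i" if "i \<le> j" for i j
  proof -
    obtain n where jn: "j \<le> c n" using cofinal by blast
    then show ?thesis
      using chain_extension_eq[OF sys c y jn] chain_extension_eq[OF sys c y order_trans[OF that jn]]
        inverse_system_trans[OF sys that jn yn] by simp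
  qed
  ultimately show "chain_extension c \<phi> y \<in> carrier (inverse_limit G \<phi>)"
    by (simp add: carrier_inverse_limit)
next
  let ?L = "inverse_limit (\<lambda>n. G (c n)) (\<lambda>n m. \<phi> (c n) (c m))"
  fix y z assume y: "y \<in> carrier ?L" and z: "z \<in> carrier ?L"
  have yz: "y \<otimes>\<^bsub>?L\<^esub> z \<in> carrier ?L"
    using y z inverse_limit_group[OF inverse_system_reindex[OF sys c]]
    by (simp add: group.is_monoid monoid.m_closed)
  have "chain_extension c \<phi> (y \<otimes>\<^bsub>?L\<^esub> z) i
        = chain_extension c \<phi> y i \<otimes>\<^bsub>G i\<^esub> chain_extension c \<phi> z i" for i
  proof -
    obtain n where n: "i \<le> c n" using cofinal by blast
    then show ?thesis
      using chain_extension_eq[OF sys c y n] chain_extension_eq[OF sys c z n]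
        chain_extension_eq[OF sys c yz n] y z
        group_hom.hom_mult[OF inverse_system_group_hom[OF sys n]]
      by (simp add: carrier_inverse_limit mult_inverse_limit)
  qed
  then show "chain_extension c \<phi> (y \<otimes>\<^bsub>?L\<^esub> z)
             = chain_extension c \<phi> y \<otimes>\<^bsub>inverse_limit G \<phi>\<^esub> chain_extension c \<phi> z"
    by (simp add: mult_inverse_limit fun_eq_iff)
qed

definition denom :: "rat \<Rightarrow> nat"
  where "denom q = nat (snd (quotient_of q))"

lemma rat_times_fact_in_Ints:
  assumes "denom q \<le> N"
  shows "q * fact N \<in> \<int>"
proof -
  obtain a b where ab: "quotient_of q = (a, b)" by (cases "quotient_of q") auto
  have b: "b > 0" using quotient_of_denom_pos[OF ab] .
  have "nat b dvd fact N" using assms b by (intro dvd_fact) (auto simp: denom_def ab)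
  then obtain t where "fact N = nat b * t" by blast
  then have "(fact N :: rat) = of_int b * of_nat t"
    using b by (metis of_nat_fact of_nat_mult of_nat_nat order_less_imp_le)
  then have "q * fact N = of_int (a * int t)"
    using quotient_of_div[OF ab] b by simp
  then show ?thesis by simp
qed

lemma fact_div_fact_rat:
  "N \<le> M \<Longrightarrow> (fact M :: rat) = fact N * of_nat (fact M div fact N :: nat)"
  by (metis fact_dvd dvd_mult_div_cancel of_nat_fact of_nat_mult)

text \<open>A root sequence in an inverse sequence \<open>(H, \<psi>)\<close>: each \<open>u n\<close> is the image of the
  \<open>(n+1)\<close>-st power of \<open>u (n+1)\<close>, so that \<open>u N\<close> plays the role of \<open>u 0 / N!\<close>.\<close>

locale root_sequence =
  fixes H :: "nat \<Rightarrow> ('a, 'c) monoid_scheme"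
    and \<psi> :: "nat \<Rightarrow> nat \<Rightarrow> 'a \<Rightarrow> 'a"
    and u :: "nat \<Rightarrow> 'a"
  assumes system: "inverse_system H \<psi>"
    and u_carrier: "u n \<in> carrier (H n)"
    and u_root: "\<psi> n (Suc n) (u (Suc n) [^]\<^bsub>H (Suc n)\<^esub> Suc n) = u n"
begin

lemma H_group: "group (H n)"
  using system by (rule inverse_system_group)

lemma H_monoid: "monoid (H n)"
  using H_group by (rule group.is_monoid)

lemma u_power:
  assumes "n \<le> m"
  shows "\<psi> n m (u m [^]\<^bsub>H m\<^esub> (fact m div fact n :: nat)) = u n"
  using assms
proof (induction m rule: dec_induct)
  case base
  show ?case
    using inverse_system_refl[OF system u_carrier] monoid.nat_pow_eone[OF H_monoid u_carrier]
    by simp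
next
  case (step m)
  let ?k = "fact m div fact n :: nat"
  let ?r = "u (Suc m) [^]\<^bsub>H (Suc m)\<^esub> Suc m"
  have r: "?r \<in> carrier (H (Suc m))"
    using monoid.nat_pow_closed[OF H_monoid u_carrier] .
  have k: "fact (Suc m) div fact n = Suc m * ?k"
    using div_mult_swap[OF fact_dvd[OF step(1)], of "Suc m"] by simp
  have pow: "u (Suc m) [^]\<^bsub>H (Suc m)\<^esub> (fact (Suc m) div fact n :: nat) = ?r [^]\<^bsub>H (Suc m)\<^esub> ?k"
    by (simp only: k monoid.nat_pow_pow[OF H_monoid u_carrier])
  have "\<psi> n (Suc m) (?r [^]\<^bsub>H (Suc m)\<^esub> ?k) = \<psi> n m (\<psi> m (Suc m) (?r [^]\<^bsub>H (Suc m)\<^esub> ?k))"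
    by (rule inverse_system_trans[OF system step(1) le_SucI[OF order_refl],
                                  OF monoid.nat_pow_closed[OF H_monoid r], symmetric])
  also have "\<psi> m (Suc m) (?r [^]\<^bsub>H (Suc m)\<^esub> ?k) = u m [^]\<^bsub>H m\<^esub> ?k"
    using group_hom.hom_nat_pow[OF inverse_system_group_hom[OF system le_SucI[OF order_refl]] r] u_root
    by simp
  finally show ?case using pow step(3) by simp
qed

lemma power_transfer:
  assumes "n \<le> N" "N \<le> M"
  shows "\<psi> n N (u N [^]\<^bsub>H N\<^esub> (a::int)) = \<psi> n M (u M [^]\<^bsub>H M\<^esub> (int (fact M div fact N) * a))"
proof -
  let ?k = "fact M div fact N :: nat"
  have "u N [^]\<^bsub>H N\<^esub> a = \<psi> N M ((u M [^]\<^bsub>H M\<^esub> ?k) [^]\<^bsub>H M\<^esub> a)"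
    using u_power[OF assms(2)] group_hom.hom_int_pow[OF inverse_system_group_hom[OF system assms(2)]]
      monoid.nat_pow_closed[OF H_monoid u_carrier] by metis
  also have "\<dots> = \<psi> N M (u M [^]\<^bsub>H M\<^esub> (int ?k * a))"
    using group.int_pow_pow[OF H_group u_carrier[of M], of "int ?k" a] by (simp add: int_pow_int)
  finally show ?thesis
    using inverse_system_trans[OF system assms] group.int_pow_closed[OF H_group u_carrier] by simp
qed

definition rational_map :: "rat \<Rightarrow> nat \<Rightarrow> 'a" where
  "rational_map q n =
     \<psi> n (max n (denom q))
       (u (max n (denom q)) [^]\<^bsub>H (max n (denom q))\<^esub> \<lfloor>q * fact (max n (denom q))\<rfloor>)"

lemma stage_value_indep:
  assumes "n \<le> N" "N \<le> M" "(q::rat) * fact N \<in> \<int>"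
  shows "\<psi> n N (u N [^]\<^bsub>H N\<^esub> \<lfloor>q * fact N\<rfloor>) = \<psi> n M (u M [^]\<^bsub>H M\<^esub> \<lfloor>q * fact M\<rfloor>)"
proof -
  obtain a where a: "q * fact N = of_int a" using assms(3) by (rule Ints_cases)
  have "q * fact M = (q * fact N) * of_nat (fact M div fact N :: nat)"
    using fact_div_fact_rat[OF assms(2)] by (simp add: mult.assoc)
  also have "\<dots> = of_int (int (fact M div fact N) * a)"
    using a by simp
  finally have "\<lfloor>q * fact M\<rfloor> = int (fact M div fact N) * a"
    by (simp only: floor_of_int)
  moreover have "\<lfloor>q * fact N\<rfloor> = a"
    using a by simp
  ultimately show ?thesis
    using power_transfer[OF assms(1,2), of a] by simp
qed

lemma rational_map_eq:
  assumes "n \<le> N" "denom q \<le> N"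
  shows "rational_map q n = \<psi> n N (u N [^]\<^bsub>H N\<^esub> \<lfloor>q * fact N\<rfloor>)"
  unfolding rational_map_def
  using stage_value_indep[of n "max n (denom q)" N q] assms rat_times_fact_in_Ints by simp

lemma rational_map_carrier: "rational_map q \<in> carrier (inverse_limit H \<psi>)"
proof -
  have "rational_map q n \<in> carrier (H n)" for n
    unfolding rational_map_def
    using inverse_system_closed[OF system] group.int_pow_closed[OF H_group u_carrier] by simp
  moreover have "\<psi> n m (rational_map q m) = rational_map q n" if "n \<le> m" for n m
  proof -
    define N where "N = max m (denom q)"
    have "\<psi> n m (rational_map q m) = \<psi> n m (\<psi> m N (u N [^]\<^bsub>H N\<^esub> \<lfloor>q * fact N\<rfloor>))"
      by (simp add: rational_map_def N_def)
    also have "\<dots> = \<psi> n N (u N [^]\<^bsub>H N\<^esub> \<lfloor>q * fact N\<rfloor>)"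
      using inverse_system_trans[OF system that] group.int_pow_closed[OF H_group u_carrier]
      by (simp add: N_def)
    also have "\<dots> = rational_map q n"
      by (rule rational_map_eq[symmetric]) (use that in \<open>auto simp: N_def\<close>)
    finally show ?thesis .
  qed
  ultimately show ?thesis by (simp add: carrier_inverse_limit)
qed

lemma rational_map_add:
  "rational_map (q + r) = rational_map q \<otimes>\<^bsub>inverse_limit H \<psi>\<^esub> rational_map r"
proof -
  have "rational_map (q + r) n = rational_map q n \<otimes>\<^bsub>H n\<^esub> rational_map r n" for n
  proof -
    define N where "N = max n (max (denom q) (max (denom r) (denom (q + r))))"
    have q: "q * fact N \<in> \<int>" and r: "r * fact N \<in> \<int>"
      by (simp_all add: N_def rat_times_fact_in_Ints)
    then have "\<lfloor>(q + r) * fact N\<rfloor> = \<lfloor>q * fact N\<rfloor> + \<lfloor>r * fact N\<rfloor>"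
      by (elim Ints_cases) (simp add: distrib_right)
    then have "\<psi> n N (u N [^]\<^bsub>H N\<^esub> \<lfloor>(q + r) * fact N\<rfloor>)
        = \<psi> n N (u N [^]\<^bsub>H N\<^esub> \<lfloor>q * fact N\<rfloor>) \<otimes>\<^bsub>H n\<^esub> \<psi> n N (u N [^]\<^bsub>H N\<^esub> \<lfloor>r * fact N\<rfloor>)"
      using group.int_pow_mult[OF H_group u_carrier]
          group_hom.hom_mult[OF inverse_system_group_hom[OF system]]
        group.int_pow_closed[OF H_group u_carrier]
      by (simp add: N_def)
    moreover have "\<And>p. denom p \<le> N \<Longrightarrow> rational_map p n = \<psi> n N (u N [^]\<^bsub>H N\<^esub> \<lfloor>p * fact N\<rfloor>)"
      by (rule rational_map_eq) (simp add: N_def)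
    ultimately show ?thesis by (simp add: N_def)
  qed
  then show ?thesis by (simp add: mult_inverse_limit fun_eq_iff)
qed

lemma rational_map_hom: "rational_map \<in> hom rational_group (inverse_limit H \<psi>)"
  by (simp add: hom_def rational_group_def rational_map_carrier rational_map_add)

lemma rational_map_one: "rational_map 1 0 = u 0"
proof -
  have "rational_map 1 0 = \<psi> 0 1 (u 1 [^]\<^bsub>H 1\<^esub> (1::int))"
    using rational_map_eq[of 0 1 1] by (simp add: denom_def)
  also have "\<dots> = \<psi> 0 1 (u 1 [^]\<^bsub>H 1\<^esub> (1::nat))"
    using group.int_pow_1[OF H_group u_carrier] monoid.nat_pow_eone[OF H_monoid u_carrier]
    by simp
  also have "\<dots> = u 0"
    using u_root[of 0] by simp
  finally show ?thesis .
qed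

end

text \<open>Existence of root sequences through any \<open>x\<close>, by dependent choice: lift the previous
  term along the surjective bonding map, then extract an \<open>(n+1)\<close>-st root by divisibility.\<close>

lemma root_sequence_exists:
  assumes sys: "inverse_system H \<psi>"
    and div: "\<And>n. divisible_group (H n)"
    and onto: "\<And>n. \<psi> n (Suc n) ` carrier (H (Suc n)) = carrier (H n)"
    and x: "x \<in> carrier (H 0)"
  obtains u where "root_sequence H \<psi> u" and "u 0 = x"
proof -
  have lift: "\<exists>y. y \<in> carrier (H (Suc n)) \<and> \<psi> n (Suc n) (y [^]\<^bsub>H (Suc n)\<^esub> Suc n) = v"
    if "v \<in> carrier (H n)" for n v
  proof -
    have "v \<in> \<psi> n (Suc n) ` carrier (H (Suc n))"
      using that onto by simp
    then obtain z where z: "z \<in> carrier (H (Suc n))" "\<psi> n (Suc n) z = v"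
      by blast
    moreover obtain y where "y \<in> carrier (H (Suc n))" "y [^]\<^bsub>H (Suc n)\<^esub> Suc n = z"
      using div[of "Suc n"] z(1) zero_less_Suc unfolding divisible_group_def by blast
    ultimately show ?thesis by blast
  qed
  have "\<exists>u. \<forall>n. (u n \<in> carrier (H n) \<and> (n = 0 \<longrightarrow> u n = x)) \<and>
               \<psi> n (Suc n) (u (Suc n) [^]\<^bsub>H (Suc n)\<^esub> Suc n) = u n"
  proof (rule dependent_nat_choice)
    show "\<exists>v. v \<in> carrier (H 0) \<and> (0 = 0 \<longrightarrow> v = x)"
      using x by blast
  next
    fix v n assume "v \<in> carrier (H n) \<and> (n = 0 \<longrightarrow> v = x)"
    then obtain y where "y \<in> carrier (H (Suc n))" "\<psi> n (Suc n) (y [^]\<^bsub>H (Suc n)\<^esub> Suc n) = v"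
      using lift by blast
    then show "\<exists>y. (y \<in> carrier (H (Suc n)) \<and> (Suc n = 0 \<longrightarrow> y = x)) \<and>
                   \<psi> n (Suc n) (y [^]\<^bsub>H (Suc n)\<^esub> Suc n) = v"
      by blast
  qed
  then obtain u where u: "\<And>n. u n \<in> carrier (H n)" "u 0 = x"
    "\<And>n. \<psi> n (Suc n) (u (Suc n) [^]\<^bsub>H (Suc n)\<^esub> Suc n) = u n"
    by blast
  show ?thesis
    using root_sequence.intro[OF sys u(1) u(3)] u(2) by (rule that)
qed

lemma inverse_sequence_rational_hom:
  assumes sys: "inverse_system H \<psi>"
    and div: "\<And>n. divisible_group (H n)"
    and onto: "\<And>n. \<psi> n (Suc n) ` carrier (H (Suc n)) = carrier (H n)"
    and x: "x \<in> carrier (H 0)"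
  obtains h where "h \<in> hom rational_group (inverse_limit H \<psi>)" and "h 1 0 = x"
proof -
  obtain u where u: "root_sequence H \<psi> u" "u 0 = x"
    using root_sequence_exists[OF sys div onto x] .
  show ?thesis
    using that root_sequence.rational_map_hom[OF u(1)] root_sequence.rational_map_one[OF u(1)] u(2)
    by blast
qed

text \<open>The same for a countable directed system and an arbitrary index \<open>\<alpha>\<close>: restrict to a
  cofinal chain starting at \<open>\<alpha>\<close>, apply the sequence case, and extend back.\<close>

lemma inverse_system_rational_hom:
  fixes G :: "'i::order \<Rightarrow> ('a, 'c) monoid_scheme"
  assumes "countable (UNIV :: 'i set)" and "\<forall>a b :: 'i. \<exists>c. a \<le> c \<and> b \<le> c"
    and sys: "inverse_system G \<phi>"
    and div: "\<And>i. divisible_group (G i)"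
    and onto: "\<And>i j. i \<le> j \<Longrightarrow> \<phi> i j ` carrier (G j) = carrier (G i)"
    and x: "x \<in> carrier (G \<alpha>)"
  obtains h where "h \<in> hom rational_group (inverse_limit G \<phi>)" and "h 1 \<alpha> = x"
proof -
  obtain c :: "nat \<Rightarrow> 'i" where c: "c 0 = \<alpha>" "mono c" "\<And>i. \<exists>n. i \<le> c n"
    using countable_directed_cofinal_chain[OF assms(1,2)] by blast
  have sys_c: "inverse_system (\<lambda>n. G (c n)) (\<lambda>n m. \<phi> (c n) (c m))"
    using inverse_system_reindex[OF sys c(2)] .
  have onto_c: "\<phi> (c n) (c (Suc n)) ` carrier (G (c (Suc n))) = carrier (G (c n))" for n
    using onto monoD[OF c(2), of n "Suc n"] by simp
  have x_c: "x \<in> carrier (G (c 0))"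
    using x c(1) by simp
  obtain g where g: "g \<in> hom rational_group (inverse_limit (\<lambda>n. G (c n)) (\<lambda>n m. \<phi> (c n) (c m)))"
      and g1: "g 1 0 = x"
    using inverse_sequence_rational_hom[OF sys_c div onto_c x_c] .
  have "chain_extension c \<phi> \<circ> g \<in> hom rational_group (inverse_limit G \<phi>)"
    using hom_compose[OF g chain_extension_hom[OF sys c(2,3)]] by (simp add: rational_group_def)
  moreover have "(chain_extension c \<phi> \<circ> g) 1 \<alpha> = x"
    using chain_extension_eq[OF sys c(2) hom_in_carrier[OF g], of 1 \<alpha> 0] g1 c(1) x
      inverse_system_refl[OF sys] by (simp add: rational_group_def)
  ultimately show ?thesis by (rule that)
qed

text \<open>Inclusion \<open>\<subseteq>\<close> holds since the divisible part lies in the limit;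
  for \<open>\<supseteq>\<close>, every \<open>x\<close> is the \<open>\<alpha>\<close>-component of \<open>h 1\<close> for a homomorphism \<open>h : \<rat> \<rightarrow> M\<close>.\<close>

theorem corollary6:
  fixes G :: "'i::order \<Rightarrow> ('a, 'c) monoid_scheme"
    and \<phi> :: "'i \<Rightarrow> 'i \<Rightarrow> 'a \<Rightarrow> 'a"
    and \<alpha> :: 'i
  assumes "countable (UNIV :: 'i set)"
    and "\<forall>a b :: 'i. \<exists>c. a \<le> c \<and> b \<le> c"
    and "inverse_system G \<phi>"
    and "\<forall>i. divisible_group (G i)"
    and "\<forall>i j. i \<le> j \<longrightarrow> \<phi> i j ` carrier (G j) = carrier (G i)"
  shows "(\<lambda>x. x \<alpha>) ` divisible_part (inverse_limit G \<phi>) = carrier (G \<alpha>)"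
proof
  show "(\<lambda>x. x \<alpha>) ` divisible_part (inverse_limit G \<phi>) \<subseteq> carrier (G \<alpha>)"
    using divisible_part_subset[OF inverse_limit_group[OF assms(3)]]
    by (auto simp: carrier_inverse_limit)
next
  show "carrier (G \<alpha>) \<subseteq> (\<lambda>x. x \<alpha>) ` divisible_part (inverse_limit G \<phi>)"
  proof
    fix x assume x: "x \<in> carrier (G \<alpha>)"
    have div: "\<And>i. divisible_group (G i)"
      and onto: "\<And>i j. i \<le> j \<Longrightarrow> \<phi> i j ` carrier (G j) = carrier (G i)"
      using assms(4,5) by blast+
    obtain h where "h \<in> hom rational_group (inverse_limit G \<phi>)" and "h 1 \<alpha> = x"
      using inverse_system_rational_hom[OF assms(1-3) div onto x] .
    then show "x \<in> (\<lambda>x. x \<alpha>) ` divisible_part (inverse_limit G \<phi>)"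
      using hom_image_in_divisible_part by blast
  qed
qed

end
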